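(* Let $g\in\mathcal C_b(E)$ with $r(g)<0$. Then for every $x\in E$ the family $\{e^{\int_0^\tau g(X_s)ds}\}_{\tau\in\mathcal T_x}$ is uniformly integrable under $\mathbb P_x$.
   Context: $X$ is a standard Feller–Markov process with values in a locally compact separable metric space $E$ with Borel $\sigma$-field $\mathcal E$; laws $\mathbb P_x$, expectations $\mathbb E_x$, $P_t(x,A)=\mathbb P_x[X_t\in A]$, and for every $t>0$ and $x_n\to x$, $\sup_{A\in\mathcal E}|P_t(x_n,A)-P_t(x,A)|\to0$. $\mathcal C_b(E)$: bounded continuous real functions. $\mathcal T_x$: $\mathbb P_x$-a.s. finite stopping times. $r(g):=\lim_{t\to\infty}\frac1t\ln\sup_{x\in E}\mathbb E_x[e^{\int_0^tg(X_s)ds}]$. *)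

theory Defs
  imports "HOL-Analysis.Analysis" "HOL-Probability.Probability"
begin

text \<open>Setting: the underlying measurable space is M (sample space), F is the filtration
 indexed by real times t, P x is the law of the process started at x (all P x live on the
 sigma-algebra of M), X t is the state at time t (only t \<ge> 0 is relevant).
 The state space E is the whole type 'e.\<close>

definition is_stopping_time :: "'w measure \<Rightarrow> (real \<Rightarrow> 'w measure) \<Rightarrow> ('w \<Rightarrow> ereal) \<Rightarrow> bool" where
  "is_stopping_time M F \<tau> \<longleftrightarrow>
     (\<forall>\<omega>\<in>space M. 0 \<le> \<tau> \<omega>) \<and>
     (\<forall>t::real. 0 \<le> t \<longrightarrow> {\<omega>\<in>space M. \<tau> \<omega> \<le> ereal t} \<in> sets (F t))"

definition filtration_infty :: "'w measure \<Rightarrow> (real \<Rightarrow> 'w measure) \<Rightarrow> 'w measure" where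
  "filtration_infty M F = sigma (space M) (\<Union>t\<in>{0..}. sets (F t))"

definition stopped_sigma :: "'w measure \<Rightarrow> (real \<Rightarrow> 'w measure) \<Rightarrow> ('w \<Rightarrow> ereal) \<Rightarrow> 'w measure" where
  "stopped_sigma M F \<tau> = sigma (space M)
     {A \<in> sets (filtration_infty M F). \<forall>t::real. 0 \<le> t \<longrightarrow> A \<inter> {\<omega>\<in>space M. \<tau> \<omega> \<le> ereal t} \<in> sets (F t)}"

definition trans_prob :: "('e \<Rightarrow> 'w measure) \<Rightarrow> (real \<Rightarrow> 'w \<Rightarrow> 'e) \<Rightarrow> real \<Rightarrow> 'e \<Rightarrow> 'e set \<Rightarrow> real" where
  "trans_prob P X t x A = measure (P x) {\<omega>\<in>space (P x). X t \<omega> \<in> A}"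

definition vanishing_at_infinity :: "('e::topological_space \<Rightarrow> real) \<Rightarrow> bool" where
  "vanishing_at_infinity f \<longleftrightarrow> continuous_on UNIV f \<and>
     (\<forall>\<epsilon>>0. \<exists>K. compact K \<and> (\<forall>y. y \<notin> K \<longrightarrow> \<bar>f y\<bar> < \<epsilon>))"

text \<open>Standard Feller--Markov process (conservative, with state space the whole type 'e).\<close>
definition standard_feller_markov ::
  "'w measure \<Rightarrow> (real \<Rightarrow> 'w measure) \<Rightarrow> ('e::{metric_space,second_countable_topology} \<Rightarrow> 'w measure)
     \<Rightarrow> (real \<Rightarrow> 'w \<Rightarrow> 'e) \<Rightarrow> bool" where
  "standard_feller_markov M F P X \<longleftrightarrow>
     \<comment> \<open>E is a locally compact (separable metric) space\<close>
     locally_compact_space (euclidean :: 'e topology) \<and>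
     \<comment> \<open>laws\<close>
     (\<forall>x. prob_space (P x) \<and> sets (P x) = sets M) \<and>
     \<comment> \<open>filtration\<close>
     (\<forall>t. space (F t) = space M \<and> sets (F t) \<subseteq> sets M) \<and>
     (\<forall>s t. 0 \<le> s \<longrightarrow> s \<le> t \<longrightarrow> sets (F s) \<subseteq> sets (F t)) \<and>
     \<comment> \<open>adaptedness\<close>
     (\<forall>t\<ge>0. X t \<in> measurable (F t) borel) \<and>
     \<comment> \<open>right-continuous paths with left limits\<close>
     (\<forall>\<omega>\<in>space M. \<forall>t\<ge>0. ((\<lambda>s. X s \<omega>) \<longlongrightarrow> X t \<omega>) (at_right t)) \<and>
     (\<forall>\<omega>\<in>space M. \<forall>t>0. \<exists>l. ((\<lambda>s. X s \<omega>) \<longlongrightarrow> l) (at_left t)) \<and>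
     \<comment> \<open>starting point\<close>
     (\<forall>x. AE \<omega> in P x. X 0 \<omega> = x) \<and>
     \<comment> \<open>measurability of the transition function\<close>
     (\<forall>t\<ge>0. \<forall>A\<in>sets borel. (\<lambda>x. trans_prob P X t x A) \<in> borel_measurable borel) \<and>
     \<comment> \<open>strong Markov property\<close>
     (\<forall>x \<tau> s (f::'e \<Rightarrow> real). is_stopping_time M F \<tau> \<longrightarrow> 0 \<le> s \<longrightarrow>
        f \<in> borel_measurable borel \<longrightarrow> bounded (range f) \<longrightarrow>
        (AE \<omega> in P x. \<tau> \<omega> < \<infinity> \<longrightarrow>
           real_cond_exp (P x) (stopped_sigma M F \<tau>)
             (\<lambda>\<omega>. indicator {\<omega>. \<tau> \<omega> < \<infinity>} \<omega> * f (X (real_of_ereal (\<tau> \<omega>) + s) \<omega>)) \<omega>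
           = (\<integral>\<omega>'. f (X s \<omega>') \<partial>P (X (real_of_ereal (\<tau> \<omega>)) \<omega>)))) \<and>
     \<comment> \<open>quasi-left continuity\<close>
     (\<forall>x (\<sigma>::nat \<Rightarrow> 'w \<Rightarrow> ereal) \<tau>. (\<forall>n. is_stopping_time M F (\<sigma> n)) \<longrightarrow>
        (\<forall>\<omega>\<in>space M. incseq (\<lambda>n. \<sigma> n \<omega>) \<and> \<tau> \<omega> = (SUP n. \<sigma> n \<omega>)) \<longrightarrow>
        (AE \<omega> in P x. \<tau> \<omega> < \<infinity> \<longrightarrow>
           (\<lambda>n. X (real_of_ereal (\<sigma> n \<omega>)) \<omega>) \<longlonglongrightarrow> X (real_of_ereal (\<tau> \<omega>)) \<omega>)) \<and>
     \<comment> \<open>Feller property: P_t maps C_0 into C_0\<close>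
     (\<forall>t\<ge>0. \<forall>f. vanishing_at_infinity f \<longrightarrow>
        vanishing_at_infinity (\<lambda>x. \<integral>\<omega>. f (X t \<omega>) \<partial>P x)) \<and>
     \<comment> \<open>strong continuity of x \<mapsto> P_t(x,.) in total variation\<close>
     (\<forall>t>0. \<forall>x (xs::nat \<Rightarrow> 'e). xs \<longlonglongrightarrow> x \<longrightarrow>
        (\<lambda>n. SUP A\<in>sets borel. \<bar>trans_prob P X t (xs n) A - trans_prob P X t x A\<bar>) \<longlonglongrightarrow> 0)"

definition Cb :: "('e::topological_space \<Rightarrow> real) set" where
  "Cb = {g. continuous_on UNIV g \<and> bounded (range g)}"

definition exp_functional :: "(real \<Rightarrow> 'w \<Rightarrow> 'e) \<Rightarrow> ('e \<Rightarrow> real) \<Rightarrow> real \<Rightarrow> 'w \<Rightarrow> real" where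
  "exp_functional X g T \<omega> = exp (LBINT s:{0..T}. g (X s \<omega>))"

text \<open>r(g) = lim_{t\<rightarrow>\<infinity>} (1/t) ln sup_x E_x[exp(\<integral>_0^t g(X_s) ds)], taken as a limsup
  (which coincides with the limit whenever it exists).\<close>
definition exp_rate :: "('e \<Rightarrow> 'w measure) \<Rightarrow> (real \<Rightarrow> 'w \<Rightarrow> 'e) \<Rightarrow> ('e \<Rightarrow> real) \<Rightarrow> ereal" where
  "exp_rate P X g = Limsup at_top
     (\<lambda>t::real. ereal (ln (SUP x. \<integral>\<omega>. exp_functional X g t \<omega> \<partial>P x) / t))"

definition uniformly_integrable :: "'w measure \<Rightarrow> 'i set \<Rightarrow> ('i \<Rightarrow> 'w \<Rightarrow> real) \<Rightarrow> bool" where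
  "uniformly_integrable M I f \<longleftrightarrow>
     (\<forall>i\<in>I. f i \<in> borel_measurable M) \<and>
     ((\<lambda>K::real. SUP i\<in>I. \<integral>\<^sup>+\<omega>. indicator {\<omega>. K < \<bar>f i \<omega>\<bar>} \<omega> * ennreal \<bar>f i \<omega>\<bar> \<partial>M)
        \<longlongrightarrow> 0) at_top"

end

theory Submission
  imports Defs
begin

text \<open>Because \<open>r(g) < 0\<close>, the expectations \<open>\<bbbE>\<^sub>x exp (\<integral>\<^sub>0\<^sup>n g(X\<^sub>s) ds)\<close> decay geometrically
  in \<open>n\<close>. Since \<open>\<bar>g\<bar> \<le> G\<close>, for any stopping time \<open>\<tau>\<close> we have
  \<open>\<integral>\<^sub>0\<^sup>\<tau> g(X\<^sub>s) ds \<le> \<integral>\<^sub>0\<^sup>\<lfloor>\<tau>\<rfloor> g(X\<^sub>s) ds + G\<close>, so every \<open>exp (\<integral>\<^sub>0\<^sup>\<tau> g(X\<^sub>s) ds)\<close> is bounded by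
  the single integrable function \<open>e\<^sup>G \<Sum>\<^sub>n exp (\<integral>\<^sub>0\<^sup>n g(X\<^sub>s) ds)\<close>. A family dominated by one
  integrable function is uniformly integrable.\<close>

lemma set_integrable_bounded:
  fixes f :: "'a \<Rightarrow> real"
  assumes [measurable]: "f \<in> borel_measurable M" and bound: "\<And>x. \<bar>f x\<bar> \<le> G"
    and [measurable]: "A \<in> sets M" and "emeasure M A < \<infinity>"
  shows "set_integrable M A f"
proof (rule set_integrable_bound[where f="\<lambda>_. G"])
  show "set_integrable M A (\<lambda>_. G)"
    using assms(4) by (simp add: set_integrable_def integrable_real_indicator)
  show "AE x in M. x \<in> A \<longrightarrow> norm (f x) \<le> norm G"
    using bound by (intro AE_I2) (metis abs_ge_zero abs_of_nonneg order_trans real_norm_def)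
qed (simp add: set_borel_measurable_def)

lemma set_integral_le_bound_times_measure:
  fixes f :: "'a \<Rightarrow> real"
  assumes [measurable]: "f \<in> borel_measurable M" and bound: "\<And>x. \<bar>f x\<bar> \<le> G"
    and [measurable]: "A \<in> sets M" and "emeasure M A < \<infinity>"
  shows "(LINT x:A|M. f x) \<le> G * measure M A"
proof -
  have "(LINT x:A|M. f x) \<le> (LINT x:A|M. G)"
    using bound assms(4) by (intro set_integral_mono set_integrable_bounded[OF assms(1) bound])
      (auto simp: abs_le_iff set_integrable_def integrable_real_indicator)
  also have "\<dots> = G * measure M A"
    using assms(4) by (simp add: set_integral_const)
  finally show ?thesis .
qed

lemma set_integral_Icc_le_extend:
  fixes f :: "real \<Rightarrow> real"
  assumes [measurable]: "f \<in> borel_measurable lborel" and bound: "\<And>s. \<bar>f s\<bar> \<le> G"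
    and "0 \<le> a" "a \<le> b"
  shows "(LBINT s:{0..b}. f s) \<le> (LBINT s:{0..a}. f s) + G * (b - a)"
proof -
  have integrable: "set_integrable lborel A f" if "A \<subseteq> {0..b}" "A \<in> sets lborel" for A
    using set_integrable_subset[OF set_integrable_bounded[OF assms(1) bound] that(2,1)]
    by (simp add: emeasure_lborel_Icc_eq)
  have "{0..b} = {0..a} \<union> {a<..b}"
    using assms(3,4) by auto
  moreover have "(LBINT s:{0..a} \<union> {a<..b}. f s) = (LBINT s:{0..a}. f s) + (LBINT s:{a<..b}. f s)"
    using assms(3,4) by (intro set_integral_Un integrable) auto
  moreover have "(LBINT s:{a<..b}. f s) \<le> G * (b - a)"
    using set_integral_le_bound_times_measure[OF assms(1) bound, of "{a<..b}"] assms(4)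
    by (simp add: emeasure_lborel_Ioc)
  ultimately show ?thesis
    by simp
qed

lemma nn_integral_tail_tendsto_0:
  fixes h :: "'a \<Rightarrow> ennreal"
  assumes [measurable]: "h \<in> borel_measurable M" and finite: "(\<integral>\<^sup>+\<omega>. h \<omega> \<partial>M) < \<infinity>"
  shows "((\<lambda>K::real. \<integral>\<^sup>+\<omega>. (if ennreal K < h \<omega> then h \<omega> else 0) \<partial>M) \<longlongrightarrow> 0) at_top"
proof -
  define H where "H K \<omega> = (if ennreal K < h \<omega> then h \<omega> else 0)" for K :: real and \<omega>
  have antitone: "H K' \<omega> \<le> H K \<omega>" if "K \<le> K'" for K K' \<omega>
    using ennreal_leI[OF that] by (auto simp: H_def dest: le_less_trans)
  have [measurable]: "H K \<in> borel_measurable M" for K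
    unfolding H_def by measurable
  have "(\<integral>\<^sup>+\<omega>. (INF n. H (real n) \<omega>) \<partial>M) = (INF n. \<integral>\<^sup>+\<omega>. H (real n) \<omega> \<partial>M)"
  proof (rule nn_integral_monotone_convergence_INF_AE')
    show "(\<integral>\<^sup>+\<omega>. H (real 0) \<omega> \<partial>M) < \<infinity>"
      using finite by (auto simp: H_def intro: le_less_trans[OF nn_integral_mono])
  qed (auto intro!: AE_I2 antitone)
  moreover have "AE \<omega> in M. (INF n. H (real n) \<omega>) = 0"
    using nn_integral_PInf_AE[OF _ finite[THEN less_imp_neq]]
  proof (rule AE_mp[OF _ AE_I2], safe)
    fix \<omega> assume "h \<omega> \<noteq> \<infinity>"
    then obtain n where "h \<omega> < of_nat n"
      using ennreal_Ex_less_of_nat by (auto simp: top.not_eq_extremum)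
    then have "H (real n) \<omega> = 0" by (auto simp: H_def ennreal_of_nat_eq_real_of_nat)
    then show "(INF n. H (real n) \<omega>) = 0" by (metis INF_lower2 UNIV_I le_zero_eq order_refl)
  qed simp
  ultimately have INF_0: "(INF n. \<integral>\<^sup>+\<omega>. H (real n) \<omega> \<partial>M) = 0"
    by (simp add: nn_integral_cong_AE)
  have "((\<lambda>K. \<integral>\<^sup>+\<omega>. H K \<omega> \<partial>M) \<longlongrightarrow> 0) at_top"
  proof (rule order_tendstoI)
    fix a :: ennreal assume "0 < a"
    then obtain n where n: "(\<integral>\<^sup>+\<omega>. H (real n) \<omega> \<partial>M) < a"
      using INF_0 by (metis INF_less_iff)
    show "\<forall>\<^sub>F K in at_top. (\<integral>\<^sup>+\<omega>. H K \<omega> \<partial>M) < a"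
      using eventually_ge_at_top[of "real n"]
      by eventually_elim (metis antitone n nn_integral_mono le_less_trans)
  qed simp
  then show ?thesis unfolding H_def .
qed

lemma uniformly_integrable_dominated:
  fixes f :: "'i \<Rightarrow> 'a \<Rightarrow> real" and h :: "'a \<Rightarrow> ennreal"
  assumes "\<And>i. i \<in> I \<Longrightarrow> f i \<in> borel_measurable M"
    and "h \<in> borel_measurable M" and "(\<integral>\<^sup>+\<omega>. h \<omega> \<partial>M) < \<infinity>"
    and dominated: "\<And>i \<omega>. i \<in> I \<Longrightarrow> \<omega> \<in> space M \<Longrightarrow> ennreal \<bar>f i \<omega>\<bar> \<le> h \<omega>"
  shows "uniformly_integrable M I f"
  unfolding uniformly_integrable_def
proof (intro conjI ballI assms(1))
  have "(\<integral>\<^sup>+\<omega>. indicator {\<omega>. K < \<bar>f i \<omega>\<bar>} \<omega> * ennreal \<bar>f i \<omega>\<bar> \<partial>M)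
      \<le> (\<integral>\<^sup>+\<omega>. (if ennreal K < h \<omega> then h \<omega> else 0) \<partial>M)"
    if "i \<in> I" and "0 \<le> K" for i and K :: real
  proof (rule nn_integral_mono)
    fix \<omega> assume "\<omega> \<in> space M"
    with dominated[OF that(1)] have le: "ennreal \<bar>f i \<omega>\<bar> \<le> h \<omega>" .
    show "indicator {\<omega>. K < \<bar>f i \<omega>\<bar>} \<omega> * ennreal \<bar>f i \<omega>\<bar> \<le> (if ennreal K < h \<omega> then h \<omega> else 0)"
    proof (cases "K < \<bar>f i \<omega>\<bar>")
      case True
      then have "ennreal K < ennreal \<bar>f i \<omega>\<bar>"
        using \<open>0 \<le> K\<close> by (intro ennreal_lessI) auto
      then have "ennreal K < h \<omega>"
        using le by (rule less_le_trans)
      with True le show ?thesis by simp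
    qed simp
  qed
  then show "((\<lambda>K. SUP i\<in>I. \<integral>\<^sup>+\<omega>. indicator {\<omega>. K < \<bar>f i \<omega>\<bar>} \<omega> * ennreal \<bar>f i \<omega>\<bar> \<partial>M) \<longlongrightarrow> 0) at_top"
    by (intro tendsto_sandwich[OF _ _ tendsto_const nn_integral_tail_tendsto_0[OF assms(2,3)]]
        eventually_mono[OF eventually_ge_at_top[of 0]] SUP_least) auto
qed

lemma dyadic_upper_approx_gt:
  fixes s :: real
  shows "s < (real_of_int \<lfloor>2^n * s\<rfloor> + 1) / 2^n"
  using real_of_int_floor_add_one_gt[of "2^n * s"] by (simp add: pos_less_divide_eq mult.commute)

lemma dyadic_upper_approx_at_right:
  fixes s :: real
  shows "filterlim (\<lambda>n::nat. (real_of_int \<lfloor>2^n * s\<rfloor> + 1) / 2^n) (at_right s) sequentially"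
proof (rule tendsto_imp_filterlim_at_right)
  have below: "(real_of_int \<lfloor>2^n * s\<rfloor> + 1) / 2^n \<le> s + 1 / 2^n" for n :: nat
  proof -
    have "(real_of_int \<lfloor>2^n * s\<rfloor> + 1) / 2^n \<le> (2^n * s + 1) / 2^n"
      by (intro divide_right_mono add_right_mono of_int_floor_le) simp
    then show ?thesis by (simp add: add_divide_distrib)
  qed
  have lim: "(\<lambda>n::nat. s + 1 / 2^n) \<longlonglongrightarrow> s"
    using tendsto_add[OF tendsto_const[of s] LIMSEQ_divide_realpow_zero[of 2 1]] by simp
  show "(\<lambda>n::nat. (real_of_int \<lfloor>2^n * s\<rfloor> + 1) / 2^n) \<longlonglongrightarrow> s"
    by (rule tendsto_sandwich[OF _ _ tendsto_const lim])
       (auto intro!: always_eventually less_imp_le[OF dyadic_upper_approx_gt] below)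
  show "\<forall>\<^sub>F n in sequentially. s < (real_of_int \<lfloor>2^n * s\<rfloor> + 1) / 2^n"
    by (intro always_eventually allI dyadic_upper_approx_gt)
qed

text \<open>Paths are only controlled at nonnegative times, so time is clamped at \<open>0\<close>.\<close>

lemma measurable_right_continuous_process:
  fixes X :: "real \<Rightarrow> 'a \<Rightarrow> 'e::metric_space"
  assumes measurable: "\<And>t. 0 \<le> t \<Longrightarrow> X t \<in> borel_measurable M"
    and right_continuous: "\<And>\<omega> t. \<omega> \<in> space M \<Longrightarrow> 0 \<le> t \<Longrightarrow> ((\<lambda>s. X s \<omega>) \<longlongrightarrow> X t \<omega>) (at_right t)"
  shows "(\<lambda>z. X (max 0 (snd z)) (fst z)) \<in> borel_measurable (M \<Otimes>\<^sub>M lborel)"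
proof (rule borel_measurable_LIMSEQ_metric)
  \<comment> \<open>Dyadic approximation from the right: each approximant takes countably many time values,
    and right-continuity gives pointwise convergence.\<close>
  define d where "d n s = (real_of_int \<lfloor>2^n * s\<rfloor> + 1) / 2^n" for n :: nat and s :: real
  show "(\<lambda>z. X (d n (max 0 (snd z))) (fst z)) \<in> borel_measurable (M \<Otimes>\<^sub>M lborel)" for n
  proof -
    have "(\<lambda>z. X (max 0 (d n (max 0 (snd z)))) (fst z)) \<in> borel_measurable (M \<Otimes>\<^sub>M lborel)"
      unfolding d_def
    proof (rule measurable_compose_countable[where f="\<lambda>k z. X (max 0 ((real_of_int k + 1) / 2^n)) (fst z)"
          and g="\<lambda>z::'a \<times> real. \<lfloor>2^n * max 0 (snd z)\<rfloor>"])
      show "(\<lambda>z. X (max 0 ((real_of_int k + 1) / 2^n)) (fst z)) \<in> borel_measurable (M \<Otimes>\<^sub>M lborel)" for k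
        using measurable by (intro measurable_compose[OF measurable_fst]) auto
      have "(\<lambda>z::'a \<times> real. 2^n * max 0 (snd z)) \<in> borel_measurable (M \<Otimes>\<^sub>M lborel)"
        by measurable
      from measurable_compose[OF this measurable_real_floor]
      show "(\<lambda>z::'a \<times> real. \<lfloor>2^n * max 0 (snd z)\<rfloor>) \<in> measurable (M \<Otimes>\<^sub>M lborel) (count_space UNIV)"
        by simp
    qed
    moreover have nonneg: "0 \<le> d n (max 0 s)" for s
      unfolding d_def by (rule less_imp_le[OF le_less_trans[OF max.cobounded1 dyadic_upper_approx_gt]])
    ultimately show ?thesis
      by (simp only: max_absorb2[OF nonneg])
  qed
  fix z :: "'a \<times> real" assume "z \<in> space (M \<Otimes>\<^sub>M lborel)"
  then have "fst z \<in> space M" by (auto simp: space_pair_measure)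
  from filterlim_compose[OF right_continuous[OF this max.cobounded1] dyadic_upper_approx_at_right]
  show "(\<lambda>n. X (d n (max 0 (snd z))) (fst z)) \<longlonglongrightarrow> X (max 0 (snd z)) (fst z)"
    unfolding d_def .
qed

text \<open>Nonnegativity suffices: \<open>ln\<close> is total with \<open>ln 0 = 0\<close>, so a vanishing supremum
  would give growth rate \<open>0\<close>.\<close>

lemma geometric_bound_of_negative_growth_rate:
  fixes m :: "'i \<Rightarrow> real \<Rightarrow> real"
  assumes nonneg: "\<And>i t. 0 \<le> t \<Longrightarrow> 0 \<le> m i t"
    and bounded: "\<And>i t. 0 \<le> t \<Longrightarrow> m i t \<le> exp (G * t)" and "0 \<le> G"
    and rate: "Limsup at_top (\<lambda>t. ereal (ln (SUP i. m i t) / t)) < 0"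
  obtains K q where "0 \<le> K" "0 < q" "q < 1" "\<And>i n. m i (real n) \<le> K * q ^ n"
proof -
  obtain C where C: "Limsup at_top (\<lambda>t. ereal (ln (SUP i. m i t) / t)) < C" "C < 0"
    using rate dense by blast
  then obtain c where c: "C = ereal c" "c < 0"
    by (cases C) auto
  have "\<forall>\<^sub>F t in at_top. ereal (ln (SUP i. m i t) / t) < C"
    by (rule Limsup_lessD[OF C(1)])
  then obtain N where N: "\<And>t. N \<le> t \<Longrightarrow> ln (SUP i. m i t) / t < c"
    unfolding eventually_at_top_linorder c(1) by auto
  have decay: "m i t \<le> exp (c * t)" if t: "max N 1 \<le> t" for i t
  proof -
    have "bdd_above (range (\<lambda>i. m i t))"
      using bounded t by (intro bdd_aboveI2[where M="exp (G * t)"]) auto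
    then have le_sup: "m i t \<le> (SUP i. m i t)"
      by (rule cSUP_upper[OF UNIV_I])
    have "ln (SUP i. m i t) < c * t"
      using N[of t] t by (simp add: divide_less_eq)
    moreover have "0 < (SUP i. m i t)"
    proof -
      have "(SUP i. m i t) \<noteq> 0"
        using \<open>ln (SUP i. m i t) < c * t\<close> mult_neg_pos[OF c(2), of t] t by auto
      with nonneg[of t i] le_sup t show ?thesis by linarith
    qed
    ultimately have "(SUP i. m i t) < exp (c * t)"
      by (metis exp_less_mono exp_ln)
    with le_sup show ?thesis by linarith
  qed
  define N' where "N' = nat \<lceil>max N 1\<rceil>"
  define K where "K = exp ((G - c) * real N')"
  have geometric: "exp (c * real n) = exp c ^ n" for n
    by (simp add: exp_of_nat_mult[symmetric] mult.commute)
  have "m i (real n) \<le> K * exp c ^ n" for i n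
  proof (cases "N' \<le> n")
    case True
    then have "m i (real n) \<le> exp (c * real n)"
      unfolding N'_def by (intro decay) linarith
    also have "\<dots> \<le> K * exp (c * real n)"
      using \<open>0 \<le> G\<close> c(2) by (simp add: K_def)
    finally show ?thesis by (simp only: geometric)
  next
    case False
    have "m i (real n) \<le> exp ((G - c) * real n) * exp (c * real n)"
      using bounded[of "real n" i] by (simp add: exp_add[symmetric] algebra_simps)
    also have "\<dots> \<le> K * exp (c * real n)"
      unfolding K_def using False \<open>0 \<le> G\<close> c(2)
      by (intro mult_right_mono exp_le_cancel_iff[THEN iffD2] mult_left_mono) auto
    finally show ?thesis by (simp only: geometric)
  qed
  moreover have "0 \<le> K" "0 < exp c" "exp c < 1"
    using c(2) by (auto simp: K_def)
  ultimately show ?thesis using that by blast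
qed

lemma nn_integral_suminf_geometric_finite:
  fixes Z :: "nat \<Rightarrow> 'a \<Rightarrow> real"
  assumes integrable: "\<And>n. integrable M (Z n)" and nonneg: "\<And>n \<omega>. 0 \<le> Z n \<omega>"
    and bound: "\<And>n. (\<integral>\<omega>. Z n \<omega> \<partial>M) \<le> K * q ^ n" and "0 \<le> K" "0 \<le> q" "q < 1"
  shows "(\<integral>\<^sup>+\<omega>. (\<Sum>n. ennreal (Z n \<omega>)) \<partial>M) < \<infinity>"
proof -
  have "(\<integral>\<^sup>+\<omega>. (\<Sum>n. ennreal (Z n \<omega>)) \<partial>M) = (\<Sum>n. \<integral>\<^sup>+\<omega>. ennreal (Z n \<omega>) \<partial>M)"
    using integrable by (intro nn_integral_suminf) auto
  also have "\<dots> = (\<Sum>n. ennreal (\<integral>\<omega>. Z n \<omega> \<partial>M))"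
    using integrable nonneg by (simp add: nn_integral_eq_integral)
  also have "\<dots> \<le> (\<Sum>n. ennreal (K * q ^ n))"
    using bound by (intro suminf_le ennreal_leI) auto
  also have "\<dots> = ennreal (\<Sum>n. K * q ^ n)"
    using assms(4-6) by (intro suminf_ennreal2) (auto intro!: summable_mult summable_geometric)
  also have "\<dots> < \<infinity>"
    by simp
  finally show ?thesis .
qed

lemma standard_feller_markovD:
  assumes "standard_feller_markov M F P X"
  shows "prob_space (P x)" "sets (P x) = sets M" "sets (F t) \<subseteq> sets M"
    and "0 \<le> t \<Longrightarrow> X t \<in> borel_measurable M"
    and "\<omega> \<in> space M \<Longrightarrow> 0 \<le> t \<Longrightarrow> ((\<lambda>s. X s \<omega>) \<longlongrightarrow> X t \<omega>) (at_right t)"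
proof -
  show "0 \<le> t \<Longrightarrow> X t \<in> borel_measurable M"
    using assms by (intro measurable_from_subalg[of M "F t"])
      (auto simp: standard_feller_markov_def subalgebra_def)
qed (use assms in \<open>auto simp: standard_feller_markov_def\<close>)

lemma stopping_time_borel_measurable:
  assumes filtration: "\<And>t. sets (F t) \<subseteq> sets M" and "is_stopping_time M F \<tau>"
  shows "\<tau> \<in> borel_measurable M"
proof (rule borel_measurableI_le)
  fix y :: ereal
  have nonneg: "\<And>\<omega>. \<omega> \<in> space M \<Longrightarrow> 0 \<le> \<tau> \<omega>"
    and adapted: "\<And>t. 0 \<le> t \<Longrightarrow> {\<omega>\<in>space M. \<tau> \<omega> \<le> ereal t} \<in> sets (F t)"
    using assms(2) unfolding is_stopping_time_def by auto
  show "{\<omega>\<in>space M. \<tau> \<omega> \<le> y} \<in> sets M"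
  proof (cases "0 \<le> y")
    case True
    then show ?thesis
      using adapted filtration by (cases y) auto
  next
    case False
    then have "{\<omega>\<in>space M. \<tau> \<omega> \<le> y} = {}"
      using nonneg order_trans by fastforce
    then show ?thesis by (metis sets.empty_sets)
  qed
qed

lemma standard_feller_markov_jointly_measurable:
  assumes "standard_feller_markov M F P X"
  shows "(\<lambda>z. X (max 0 (snd z)) (fst z)) \<in> borel_measurable (M \<Otimes>\<^sub>M lborel)"
  using standard_feller_markovD(4,5)[OF assms] by (rule measurable_right_continuous_process)

lemma standard_feller_markov_path_measurable:
  assumes "standard_feller_markov M F P X" and "\<omega> \<in> space M"
  shows "(\<lambda>s. X (max 0 s) \<omega>) \<in> borel_measurable lborel"
  using measurable_Pair2[OF standard_feller_markov_jointly_measurable[OF assms(1)] assms(2)] by simp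

lemma exp_functional_eq_max0:
  "exp_functional X g t \<omega> = exp (LBINT s:{0..t}. g (X (max 0 s) \<omega>))"
  unfolding exp_functional_def by (intro arg_cong[where f=exp] set_lebesgue_integral_cong) auto

lemma exp_functional_measurable:
  assumes "standard_feller_markov M F P X" and g: "g \<in> borel_measurable borel"
    and [measurable]: "T \<in> borel_measurable M"
  shows "(\<lambda>\<omega>. exp_functional X g (T \<omega>) \<omega>) \<in> borel_measurable M"
proof -
  from measurable_compose[OF standard_feller_markov_jointly_measurable[OF assms(1)] g]
  have [measurable]: "(\<lambda>z. g (X (max 0 (snd z)) (fst z))) \<in> borel_measurable (M \<Otimes>\<^sub>M lborel)" .
  have "(\<lambda>z. (if 0 \<le> snd z \<and> snd z \<le> T (fst z) then 1 else 0) * g (X (max 0 (snd z)) (fst z)) :: real)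
      \<in> borel_measurable (M \<Otimes>\<^sub>M lborel)"
    by measurable
  then have "(\<lambda>z. indicator {0..T (fst z)} (snd z) *\<^sub>R g (X (max 0 (snd z)) (fst z)) :: real)
      \<in> borel_measurable (M \<Otimes>\<^sub>M lborel)"
    by (simp add: indicator_def)
  then have "(\<lambda>\<omega>. LBINT s:{0..T \<omega>}. g (X (max 0 s) \<omega>)) \<in> borel_measurable M"
    unfolding set_lebesgue_integral_def
    by (intro lborel.borel_measurable_lebesgue_integral) (simp add: split_beta')
  then show ?thesis
    unfolding exp_functional_eq_max0 by measurable
qed

lemma exp_functional_le_exp:
  assumes "standard_feller_markov M F P X" and [measurable]: "g \<in> borel_measurable borel"
    and bound: "\<And>y. \<bar>g y\<bar> \<le> G" and "0 \<le> t" and "\<omega> \<in> space M"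
  shows "exp_functional X g t \<omega> \<le> exp (G * t)"
proof -
  have [measurable]: "(\<lambda>s. X (max 0 s) \<omega>) \<in> borel_measurable lborel"
    using standard_feller_markov_path_measurable assms(1,5) .
  have "(LBINT s:{0..t}. g (X (max 0 s) \<omega>)) \<le> G * t"
    using set_integral_le_bound_times_measure[of "\<lambda>s. g (X (max 0 s) \<omega>)" lborel G "{0..t}"]
      bound \<open>0 \<le> t\<close> by (simp add: emeasure_lborel_Icc_eq)
  then show ?thesis
    unfolding exp_functional_eq_max0 by simp
qed

lemma exp_functional_le_floor:
  assumes "standard_feller_markov M F P X" and [measurable]: "g \<in> borel_measurable borel"
    and bound: "\<And>y. \<bar>g y\<bar> \<le> G" and "0 \<le> t" and "\<omega> \<in> space M"
  shows "exp_functional X g t \<omega> \<le> exp G * exp_functional X g (real (nat \<lfloor>t\<rfloor>)) \<omega>"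
proof -
  have [measurable]: "(\<lambda>s. X (max 0 s) \<omega>) \<in> borel_measurable lborel"
    using standard_feller_markov_path_measurable assms(1,5) .
  have "(LBINT s:{0..t}. g (X (max 0 s) \<omega>))
      \<le> (LBINT s:{0..real (nat \<lfloor>t\<rfloor>)}. g (X (max 0 s) \<omega>)) + G * (t - real (nat \<lfloor>t\<rfloor>))"
    using \<open>0 \<le> t\<close> bound by (intro set_integral_Icc_le_extend) auto
  also have "G * (t - real (nat \<lfloor>t\<rfloor>)) \<le> G"
    using \<open>0 \<le> t\<close> bound[of undefined] by (intro mult_left_le) linarith+
  finally show ?thesis
    unfolding exp_functional_eq_max0 by (simp add: exp_add[symmetric])
qed

lemma exp_functional_le_suminf:
  assumes "standard_feller_markov M F P X" and "g \<in> borel_measurable borel"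
    and "\<And>y. \<bar>g y\<bar> \<le> G" and "0 \<le> t" and "\<omega> \<in> space M"
  shows "ennreal (exp_functional X g t \<omega>) \<le> (\<Sum>n. ennreal (exp G * exp_functional X g (real n) \<omega>))"
proof -
  have "ennreal (exp_functional X g t \<omega>) \<le> ennreal (exp G * exp_functional X g (real (nat \<lfloor>t\<rfloor>)) \<omega>)"
    using exp_functional_le_floor[OF assms] by (rule ennreal_leI)
  also have "\<dots> \<le> (\<Sum>n. ennreal (exp G * exp_functional X g (real n) \<omega>))"
    using sum_le_suminf[OF summableI, of "{nat \<lfloor>t\<rfloor>}"] by simp
  finally show ?thesis .
qed

lemma integrable_exp_functional:
  assumes "standard_feller_markov M F P X" and "g \<in> borel_measurable borel"
    and "\<And>y. \<bar>g y\<bar> \<le> G" and "0 \<le> t"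
  shows "integrable (P x) (exp_functional X g t)"
proof (rule finite_measure.integrable_const_bound[where B="exp (G * t)"])
  show "finite_measure (P x)"
    using standard_feller_markovD(1)[OF assms(1)] by (rule prob_space.finite_measure)
  show "exp_functional X g t \<in> borel_measurable (P x)"
    using exp_functional_measurable[OF assms(1,2), of "\<lambda>_. t"]
    by (simp add: measurable_cong_sets[OF standard_feller_markovD(2)[OF assms(1)] refl])
  show "AE \<omega> in P x. norm (exp_functional X g t \<omega>) \<le> exp (G * t)"
    using exp_functional_le_exp[OF assms] sets_eq_imp_space_eq[OF standard_feller_markovD(2)[OF assms(1)]]
    by (intro AE_I2) (simp add: exp_functional_def)
qed

lemma expectation_exp_functional_le_exp:
  assumes "standard_feller_markov M F P X" and "g \<in> borel_measurable borel"
    and "\<And>y. \<bar>g y\<bar> \<le> G" and "0 \<le> t"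
  shows "(\<integral>\<omega>. exp_functional X g t \<omega> \<partial>P x) \<le> exp (G * t)"
  using exp_functional_le_exp[OF assms] sets_eq_imp_space_eq[OF standard_feller_markovD(2)[OF assms(1)]]
  by (intro prob_space.integral_le_const[OF standard_feller_markovD(1)[OF assms(1)]
        integrable_exp_functional[OF assms]] AE_I2) auto

lemma exp_functional_dominated:
  assumes sfm: "standard_feller_markov M F P X" and g: "g \<in> borel_measurable borel"
    and G: "\<And>y. \<bar>g y\<bar> \<le> G" and rate: "exp_rate P X g < 0"
  obtains h where "h \<in> borel_measurable (P x)" "(\<integral>\<^sup>+\<omega>. h \<omega> \<partial>P x) < \<infinity>"
    and "\<And>t \<omega>. 0 \<le> t \<Longrightarrow> \<omega> \<in> space M \<Longrightarrow> ennreal (exp_functional X g t \<omega>) \<le> h \<omega>"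
proof
  have "0 \<le> G"
    using G[of x] by linarith
  have nonneg: "0 \<le> (\<integral>\<omega>. exp_functional X g t \<omega> \<partial>P y)" for t y
    by (simp add: exp_functional_def)
  obtain K q where "0 \<le> K" "0 < q" "q < 1"
    and decay: "\<And>y n. (\<integral>\<omega>. exp_functional X g (real n) \<omega> \<partial>P y) \<le> K * q ^ n"
    using geometric_bound_of_negative_growth_rate[where m="\<lambda>y t. \<integral>\<omega>. exp_functional X g t \<omega> \<partial>P y",
        OF nonneg expectation_exp_functional_le_exp[OF sfm g G] \<open>0 \<le> G\<close> rate[unfolded exp_rate_def]]
    by blast
  define h where "h \<omega> = (\<Sum>n. ennreal (exp G * exp_functional X g (real n) \<omega>))" for \<omega>
  show "h \<in> borel_measurable (P x)"
    using exp_functional_measurable[OF sfm g, of "\<lambda>_. real _"]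
    unfolding h_def by (simp add: measurable_cong_sets[OF standard_feller_markovD(2)[OF sfm] refl])
  show "(\<integral>\<^sup>+\<omega>. h \<omega> \<partial>P x) < \<infinity>"
    unfolding h_def
  proof (rule nn_integral_suminf_geometric_finite[where K="exp G * K" and q=q])
    show "integrable (P x) (\<lambda>\<omega>. exp G * exp_functional X g (real n) \<omega>)" for n
      using integrable_exp_functional[OF sfm g G, of "real n"] by simp
    show "(\<integral>\<omega>. exp G * exp_functional X g (real n) \<omega> \<partial>P x) \<le> exp G * K * q ^ n" for n
      using decay[of x n] by (simp add: mult.assoc)
  qed (use \<open>0 \<le> K\<close> \<open>0 < q\<close> \<open>q < 1\<close> in \<open>auto simp: exp_functional_def\<close>)
  show "ennreal (exp_functional X g t \<omega>) \<le> h \<omega>" if "0 \<le> t" "\<omega> \<in> space M" for t \<omega>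
    unfolding h_def by (rule exp_functional_le_suminf[OF sfm g G that])
qed

theorem propositionA2:
  fixes M :: "'w measure" and F :: "real \<Rightarrow> 'w measure"
    and P :: "'e::{metric_space,second_countable_topology} \<Rightarrow> 'w measure"
    and X :: "real \<Rightarrow> 'w \<Rightarrow> 'e" and g :: "'e \<Rightarrow> real" and x :: 'e
  assumes "standard_feller_markov M F P X"
    and "g \<in> Cb"
    and "exp_rate P X g < 0"
  shows "uniformly_integrable (P x)
           {\<tau>. is_stopping_time M F \<tau> \<and> (AE \<omega> in P x. \<tau> \<omega> < \<infinity>)}
           (\<lambda>\<tau> \<omega>. exp_functional X g (real_of_ereal (\<tau> \<omega>)) \<omega>)"
proof -
  note sfm = assms(1) and sets_P = standard_feller_markovD(2)[OF assms(1)]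
  have g: "g \<in> borel_measurable borel" and "bounded (range g)"
    using assms(2) by (auto simp: Cb_def intro: borel_measurable_continuous_onI)
  then obtain G where G: "\<And>y. \<bar>g y\<bar> \<le> G"
    by (auto simp: bounded_iff)
  obtain h where h: "h \<in> borel_measurable (P x)" "(\<integral>\<^sup>+\<omega>. h \<omega> \<partial>P x) < \<infinity>"
    and dominated: "\<And>t \<omega>. 0 \<le> t \<Longrightarrow> \<omega> \<in> space M \<Longrightarrow> ennreal (exp_functional X g t \<omega>) \<le> h \<omega>"
    using exp_functional_dominated[OF sfm g G assms(3)] by blast
  show ?thesis
  proof (rule uniformly_integrable_dominated[OF _ h])
    fix \<tau> assume "\<tau> \<in> {\<tau>. is_stopping_time M F \<tau> \<and> (AE \<omega> in P x. \<tau> \<omega> < \<infinity>)}"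
    then have stopping_time: "is_stopping_time M F \<tau>"
      by simp
    have [measurable]: "\<tau> \<in> borel_measurable M"
      using standard_feller_markovD(3)[OF sfm] stopping_time by (rule stopping_time_borel_measurable)
    show "(\<lambda>\<omega>. exp_functional X g (real_of_ereal (\<tau> \<omega>)) \<omega>) \<in> borel_measurable (P x)"
      using exp_functional_measurable[OF sfm g, of "\<lambda>\<omega>. real_of_ereal (\<tau> \<omega>)"]
      by (simp add: measurable_cong_sets[OF sets_P refl])
    show "ennreal \<bar>exp_functional X g (real_of_ereal (\<tau> \<omega>)) \<omega>\<bar> \<le> h \<omega>" if "\<omega> \<in> space (P x)" for \<omega>
      using dominated[OF real_of_ereal_pos] stopping_time that
      by (simp add: exp_functional_def sets_eq_imp_space_eq[OF sets_P] is_stopping_time_def)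
  qed
qed

end
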